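(* Let $S$ be an orthodox semigroup with an adequate (and hence inverse) transversal $S^0$. Then for all $x,y\in S$, $\overline{xy}=\overline{x}\,\overline{y}$.
   Context: An orthodox semigroup is a regular semigroup whose idempotents form a subsemigroup. For a semigroup $S$, $S^1$ is $S$ with an identity adjoined, $\mathcal{L},\mathcal{R}$ Green's relations. $\mathcal{R}^\ast=\{(a,b):\forall x,y\in S^1,\ xa=ya\iff xb=yb\}$, $\mathcal{L}^\ast=\{(a,b):\forall x,y\in S^1,\ ax=ay\iff bx=by\}$. $S$ is abundant if each $\mathcal{R}^\ast$- and $\mathcal{L}^\ast$-class contains an idempotent (regular semigroups are abundant); adequate if also idempotents commute (then $a^+$, $a^\ast$ are the unique idempotents $\mathcal{R}^\ast$-, resp. $\mathcal{L}^\ast$-related to $a$). An abundant subsemigroup $U$ of abundant $S$ is a $\ast$-subsemigroup if $\mathcal{L}^\ast(U)=\mathcal{L}^\ast(S)\cap(U\times U)$, $\mathcal{R}^\ast(U)=\mathcal{R}^\ast(S)\cap(U\times U)$. An adequate $\ast$-subsemigroup $S^0$ of abundant $S$ is an adequate transversal if each $x\in S$ has a unique $\overline{x}\in S^0$ and idempotents $e,f$ of $S$ with $x=e\overline{x}f$, $e\,\mathcal{L}\,\overline{x}^+$, $f\,\mathcal{R}\,\overline{x}^\ast$. *)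

theory Defs
  imports Main
begin

text \<open>The semigroup S is the whole carrier of a type of class semigroup_mult.
  Elements of S^1 (resp. U^1) are encoded as options: None is the adjoined identity.\<close>

definition one_ext :: "'a set \<Rightarrow> 'a option set" where
  "one_ext U = {None} \<union> Some ` U"

fun lmul :: "'a::semigroup_mult option \<Rightarrow> 'a \<Rightarrow> 'a" where
  "lmul None a = a"
| "lmul (Some x) a = x * a"

fun rmul :: "'a::semigroup_mult \<Rightarrow> 'a option \<Rightarrow> 'a" where
  "rmul a None = a"
| "rmul a (Some x) = a * x"

definition idem :: "'a::semigroup_mult \<Rightarrow> bool" where
  "idem e \<longleftrightarrow> e * e = e"

definition subsemigroup :: "'a::semigroup_mult set \<Rightarrow> bool" where
  "subsemigroup U \<longleftrightarrow> (\<forall>a\<in>U. \<forall>b\<in>U. a * b \<in> U)"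

definition regular :: "'a::semigroup_mult itself \<Rightarrow> bool" where
  "regular _ \<longleftrightarrow> (\<forall>a::'a. \<exists>x. a * x * a = a)"

definition orthodox :: "'a::semigroup_mult itself \<Rightarrow> bool" where
  "orthodox T \<longleftrightarrow> regular T \<and> (\<forall>e f::'a. idem e \<longrightarrow> idem f \<longrightarrow> idem (e * f))"

definition greenL :: "'a::semigroup_mult \<Rightarrow> 'a \<Rightarrow> bool" where
  "greenL a b \<longleftrightarrow> (\<exists>x\<in>one_ext UNIV. a = lmul x b) \<and> (\<exists>y\<in>one_ext UNIV. b = lmul y a)"

definition greenR :: "'a::semigroup_mult \<Rightarrow> 'a \<Rightarrow> bool" where
  "greenR a b \<longleftrightarrow> (\<exists>x\<in>one_ext UNIV. a = rmul b x) \<and> (\<exists>y\<in>one_ext UNIV. b = rmul a y)"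

definition Rstar :: "'a::semigroup_mult set \<Rightarrow> 'a \<Rightarrow> 'a \<Rightarrow> bool" where
  "Rstar U a b \<longleftrightarrow> (\<forall>x\<in>one_ext U. \<forall>y\<in>one_ext U. lmul x a = lmul y a \<longleftrightarrow> lmul x b = lmul y b)"

definition Lstar :: "'a::semigroup_mult set \<Rightarrow> 'a \<Rightarrow> 'a \<Rightarrow> bool" where
  "Lstar U a b \<longleftrightarrow> (\<forall>x\<in>one_ext U. \<forall>y\<in>one_ext U. rmul a x = rmul a y \<longleftrightarrow> rmul b x = rmul b y)"

definition abundant :: "'a::semigroup_mult set \<Rightarrow> bool" where
  "abundant U \<longleftrightarrow> subsemigroup U \<and>
     (\<forall>a\<in>U. (\<exists>e\<in>U. idem e \<and> Rstar U a e) \<and> (\<exists>f\<in>U. idem f \<and> Lstar U a f))"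

definition adequate :: "'a::semigroup_mult set \<Rightarrow> bool" where
  "adequate U \<longleftrightarrow> abundant U \<and> (\<forall>e\<in>U. \<forall>f\<in>U. idem e \<longrightarrow> idem f \<longrightarrow> e * f = f * e)"

definition star_subsemigroup :: "'a::semigroup_mult set \<Rightarrow> bool" where
  "star_subsemigroup U \<longleftrightarrow> abundant U \<and>
     (\<forall>a\<in>U. \<forall>b\<in>U. (Lstar U a b \<longleftrightarrow> Lstar UNIV a b) \<and> (Rstar U a b \<longleftrightarrow> Rstar UNIV a b))"

definition plus :: "'a::semigroup_mult set \<Rightarrow> 'a \<Rightarrow> 'a" where
  "plus U a = (THE e. e \<in> U \<and> idem e \<and> Rstar U a e)"

definition star :: "'a::semigroup_mult set \<Rightarrow> 'a \<Rightarrow> 'a" where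
  "star U a = (THE f. f \<in> U \<and> idem f \<and> Lstar U a f)"

definition decomp :: "'a::semigroup_mult set \<Rightarrow> 'a \<Rightarrow> 'a \<Rightarrow> bool" where
  "decomp S0 x xb \<longleftrightarrow> xb \<in> S0 \<and>
     (\<exists>e f. idem e \<and> idem f \<and> x = e * xb * f \<and> greenL e (plus S0 xb) \<and> greenR f (star S0 xb))"

definition adequate_transversal :: "'a::semigroup_mult set \<Rightarrow> bool" where
  "adequate_transversal S0 \<longleftrightarrow> adequate S0 \<and> star_subsemigroup S0 \<and>
     (\<forall>x. \<exists>!xb. decomp S0 x xb)"

definition bar :: "'a::semigroup_mult set \<Rightarrow> 'a \<Rightarrow> 'a" where
  "bar S0 x = (THE xb. decomp S0 x xb)"

end

theory Submission
  imports Defs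
begin

text \<open>The transversal element of \<open>x\<close> is characterised through inverses: if \<open>a' \<in> S\<^sup>0\<close> is an
  inverse of \<open>bar x\<close> then \<open>a'\<close> is an inverse of \<open>x\<close>, and conversely any \<open>c \<in> S\<^sup>0\<close> sharing an inverse
  \<open>w \<in> S\<^sup>0\<close> with \<open>x\<close> is \<open>bar x\<close>, since \<open>x = (x w) c (w x)\<close> with \<open>x w \<L> c w = c\<^sup>+\<close> and
  \<open>w x \<R> w c = c\<^sup>*\<close>. This requires every element of \<open>S\<^sup>0\<close> to have an inverse in \<open>S\<^sup>0\<close>: the inverse
  \<open>a\<^sup>* y a\<^sup>+\<close> of \<open>a\<close> (with \<open>a y a = a\<close>) turns out to equal its own transversal element. In an
  orthodox semigroup \<open>b' a'\<close> is an inverse of \<open>a b\<close> whenever \<open>a'\<close>, \<open>b'\<close> are inverses of \<open>a\<close>,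
  \<open>b\<close>; so with \<open>a'\<close>, \<open>b'\<close> inverses of \<open>bar x\<close>, \<open>bar y\<close> in \<open>S\<^sup>0\<close>, the element \<open>b' a'\<close> is a
  common inverse of \<open>x y\<close> and \<open>bar x bar y\<close>.\<close>

definition mutually_inverse :: "'a::semigroup_mult \<Rightarrow> 'a \<Rightarrow> bool" where
  "mutually_inverse a b \<longleftrightarrow> a * b * a = a \<and> b * a * b = b"

lemma mutually_inverse_idem:
  assumes "mutually_inverse a b"
  shows "idem (a * b)" "idem (b * a)"
  using assms by (simp_all add: mutually_inverse_def idem_def mult.assoc[symmetric])

lemma lmul_mult_assoc: "lmul u (s * t) = lmul u s * t"
  by (cases u) (simp_all add: mult.assoc)

lemma rmul_mult_assoc: "rmul (s * t) u = s * rmul t u"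
  by (cases u) (simp_all add: mult.assoc)

lemma one_ext_None [simp]: "None \<in> one_ext U"
  by (simp add: one_ext_def)

lemma one_ext_Some [simp]: "Some y \<in> one_ext U \<longleftrightarrow> y \<in> U"
  by (auto simp: one_ext_def)

lemma adequate_mult_closed:
  assumes "adequate S0" "a \<in> S0" "b \<in> S0"
  shows "a * b \<in> S0"
  using assms unfolding adequate_def abundant_def subsemigroup_def by blast

lemma Rstar_idem_mult_left:
  assumes "Rstar U a e" "idem e" "e \<in> U"
  shows "e * a = a"
proof -
  have "lmul (Some e) e = lmul None e" using assms(2) by (simp add: idem_def)
  then have "lmul (Some e) a = lmul None a"
    using assms(1) assms(3) unfolding Rstar_def by (metis one_ext_None one_ext_Some)
  then show ?thesis by simp
qed

lemma Lstar_idem_mult_right: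
  assumes "Lstar U a f" "idem f" "f \<in> U"
  shows "a * f = a"
proof -
  have "rmul f (Some f) = rmul f None" using assms(2) by (simp add: idem_def)
  then have "rmul a (Some f) = rmul a None"
    using assms(1) assms(3) unfolding Lstar_def by (metis one_ext_None one_ext_Some)
  then show ?thesis by simp
qed

lemma Rstar_UNIV_regular:
  assumes "Rstar UNIV a e" "a * x * a = a"
  shows "a * x * e = e"
proof -
  have "lmul (Some (a * x)) a = lmul None a" using assms(2) by simp
  then have "lmul (Some (a * x)) e = lmul None e"
    using assms(1) unfolding Rstar_def by (metis one_ext_None one_ext_Some UNIV_I)
  then show ?thesis by simp
qed

lemma Lstar_UNIV_regular:
  assumes "Lstar UNIV a f" "a * x * a = a"
  shows "f * x * a = f"
proof -
  have "rmul a (Some (x * a)) = rmul a None" using assms(2) by (simp add: mult.assoc)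
  then have "rmul f (Some (x * a)) = rmul f None"
    using assms(1) unfolding Lstar_def by (metis one_ext_None one_ext_Some UNIV_I)
  then show ?thesis by (simp add: mult.assoc)
qed

lemma greenL_idem:
  assumes "greenL g p" "idem g" "idem p"
  shows "g * p = g" "p * g = p"
proof -
  obtain u v where u: "g = lmul u p" and v: "p = lmul v g"
    using assms(1) unfolding greenL_def by blast
  have "g * p = lmul u (p * p)" using u lmul_mult_assoc by metis
  then show "g * p = g" using u assms(3) by (simp add: idem_def)
  have "p * g = lmul v (g * g)" using v lmul_mult_assoc by metis
  then show "p * g = p" using v assms(2) by (simp add: idem_def)
qed

lemma greenR_idem:
  assumes "greenR h q" "idem h" "idem q"
  shows "q * h = h" "h * q = q"
proof -
  obtain u v where u: "h = rmul q u" and v: "q = rmul h v"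
    using assms(1) unfolding greenR_def by blast
  have "q * h = rmul (q * q) u" using u rmul_mult_assoc by metis
  then show "q * h = h" using u assms(3) by (simp add: idem_def)
  have "h * q = rmul (h * h) v" using v rmul_mult_assoc by metis
  then show "h * q = q" using v assms(2) by (simp add: idem_def)
qed

lemma greenL_mutually_inverse:
  assumes "mutually_inverse z w" "mutually_inverse c w"
  shows "greenL (z * w) (c * w)"
proof -
  have "z * w = lmul (Some (z * w)) (c * w)"
    using assms by (simp add: mutually_inverse_def mult.assoc)
  moreover have "c * w = lmul (Some (c * w)) (z * w)"
    using assms by (simp add: mutually_inverse_def mult.assoc)
  ultimately show ?thesis unfolding greenL_def by (metis one_ext_Some UNIV_I)
qed

lemma greenR_mutually_inverse:
  assumes "mutually_inverse z w" "mutually_inverse c w"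
  shows "greenR (w * z) (w * c)"
proof -
  have "w * z = rmul (w * c) (Some (w * z))"
    using assms by (simp add: mutually_inverse_def mult.assoc[symmetric])
  moreover have "w * c = rmul (w * z) (Some (w * c))"
    using assms by (simp add: mutually_inverse_def mult.assoc[symmetric])
  ultimately show ?thesis unfolding greenR_def by (metis one_ext_Some UNIV_I)
qed

lemma adequate_Rstar_idem_unique:
  assumes ad: "adequate S0" and e: "e \<in> S0" "idem e" "Rstar S0 c e"
    and e': "e' \<in> S0" "idem e'" "Rstar S0 c e'"
  shows "e = e'"
proof -
  have "Rstar S0 e e'" "Rstar S0 e' e" using e(3) e'(3) unfolding Rstar_def by blast+
  then have "e * e' = e'" "e' * e = e"
    using Rstar_idem_mult_left e e' by blast+
  moreover have "e * e' = e' * e" using ad e e' unfolding adequate_def by blast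
  ultimately show ?thesis by simp
qed

lemma adequate_Lstar_idem_unique:
  assumes ad: "adequate S0" and f: "f \<in> S0" "idem f" "Lstar S0 c f"
    and f': "f' \<in> S0" "idem f'" "Lstar S0 c f'"
  shows "f = f'"
proof -
  have "Lstar S0 f f'" "Lstar S0 f' f" using f(3) f'(3) unfolding Lstar_def by blast+
  then have "f * f' = f" "f' * f = f'"
    using Lstar_idem_mult_right f f' by blast+
  moreover have "f * f' = f' * f" using ad f f' unfolding adequate_def by blast
  ultimately show ?thesis by simp
qed

lemma plus_props:
  assumes ad: "adequate S0" and b: "b \<in> S0"
  shows "plus S0 b \<in> S0" "idem (plus S0 b)" "Rstar S0 b (plus S0 b)"
proof -
  have "\<exists>e. e \<in> S0 \<and> idem e \<and> Rstar S0 b e"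
    using ad b unfolding adequate_def abundant_def by blast
  then have "\<exists>!e. e \<in> S0 \<and> idem e \<and> Rstar S0 b e"
    using adequate_Rstar_idem_unique[OF ad] by blast
  then have "plus S0 b \<in> S0 \<and> idem (plus S0 b) \<and> Rstar S0 b (plus S0 b)"
    unfolding plus_def by (rule theI')
  then show "plus S0 b \<in> S0" "idem (plus S0 b)" "Rstar S0 b (plus S0 b)" by auto
qed

lemma star_props:
  assumes ad: "adequate S0" and b: "b \<in> S0"
  shows "star S0 b \<in> S0" "idem (star S0 b)" "Lstar S0 b (star S0 b)"
proof -
  have "\<exists>f. f \<in> S0 \<and> idem f \<and> Lstar S0 b f"
    using ad b unfolding adequate_def abundant_def by blast
  then have "\<exists>!f. f \<in> S0 \<and> idem f \<and> Lstar S0 b f"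
    using adequate_Lstar_idem_unique[OF ad] by blast
  then have "star S0 b \<in> S0 \<and> idem (star S0 b) \<and> Lstar S0 b (star S0 b)"
    unfolding star_def by (rule theI')
  then show "star S0 b \<in> S0" "idem (star S0 b)" "Lstar S0 b (star S0 b)" by auto
qed

lemma plus_eq_mutually_inverse:
  assumes ad: "adequate S0" and c: "c \<in> S0" "w \<in> S0" "mutually_inverse c w"
  shows "plus S0 c = c * w"
proof (rule adequate_Rstar_idem_unique[OF ad plus_props[OF ad c(1)]])
  show "c * w \<in> S0" using adequate_mult_closed ad c by blast
  show "idem (c * w)" using mutually_inverse_idem c(3) by blast
  have "lmul u (c * w) = lmul u c * w" for u by (rule lmul_mult_assoc)
  moreover have "lmul u c = lmul u (c * w) * c" for u
    using c(3) lmul_mult_assoc[of u "c * w" c] by (simp add: mutually_inverse_def)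
  ultimately show "Rstar S0 c (c * w)" unfolding Rstar_def by metis
qed

lemma star_eq_mutually_inverse:
  assumes ad: "adequate S0" and c: "c \<in> S0" "w \<in> S0" "mutually_inverse c w"
  shows "star S0 c = w * c"
proof (rule adequate_Lstar_idem_unique[OF ad star_props[OF ad c(1)]])
  show "w * c \<in> S0" using adequate_mult_closed ad c by blast
  show "idem (w * c)" using mutually_inverse_idem c(3) by blast
  have "rmul (w * c) u = w * rmul c u" for u by (rule rmul_mult_assoc)
  moreover have "rmul c u = c * rmul (w * c) u" for u
    using c(3) rmul_mult_assoc[of c "w * c" u]
    by (simp add: mutually_inverse_def mult.assoc[symmetric])
  ultimately show "Lstar S0 c (w * c)" unfolding Lstar_def by metis
qed

subsection \<open>An adequate transversal of a regular semigroup is an inverse subsemigroup\<close>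

lemma star_subsemigroup_local_inverse:
  assumes ss: "star_subsemigroup S0" and a: "a \<in> S0" "a * x * a = a"
    and e: "e \<in> S0" "idem e" "Rstar S0 a e"
    and f: "f \<in> S0" "idem f" "Lstar S0 a f"
  shows "a * (f * x * e) = e" "(f * x * e) * a = f"
proof -
  have "Rstar UNIV a e" "Lstar UNIV a f" using ss a e f unfolding star_subsemigroup_def by blast+
  then have "a * x * e = e" "f * x * a = f"
    using Rstar_UNIV_regular Lstar_UNIV_regular a(2) by blast+
  moreover have "e * a = a" "a * f = a"
    using Rstar_idem_mult_left[OF e(3,2,1)] Lstar_idem_mult_right[OF f(3,2,1)] .
  ultimately show "a * (f * x * e) = e" "(f * x * e) * a = f" by (metis mult.assoc)+
qed

lemma decomp_left_factor_eq_plus: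
  assumes ad: "adequate S0" and ss: "star_subsemigroup S0"
    and b: "b \<in> S0" "b * y * b = b"
    and z: "z = g * b * h" "greenL g (plus S0 b)" "greenR h (star S0 b)" "idem g" "idem h"
    and f: "f \<in> S0" "idem f" "f * z = z" "g * f = f"
  shows "g = plus S0 b"
proof -
  define p q where "p = plus S0 b" and "q = star S0 b"
  have p: "p \<in> S0" "idem p" "Rstar S0 b p" and q: "q \<in> S0" "idem q" "Lstar S0 b q"
    using plus_props[OF ad b(1)] star_props[OF ad b(1)] unfolding p_def q_def by auto
  have "Rstar UNIV b p" using ss b(1) p unfolding star_subsemigroup_def by blast
  then have byp: "b * y * p = p" using Rstar_UNIV_regular b(2) by blast
  have bq: "b * q = b" using Lstar_idem_mult_right[OF q(3,2,1)] .
  have gp: "g * p = g" and pg: "p * g = p" using greenL_idem z(2,4) p(2) unfolding p_def by auto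
  have hq: "h * q = q" using greenR_idem z(3,5) q(2) unfolding q_def by auto
  have "z * q * y * p = g * (b * (h * q)) * y * p" using z(1) by (simp add: mult.assoc)
  also have "\<dots> = g" using hq bq byp gp by (simp add: mult.assoc)
  finally have fg: "f * g = g" using f(3) by (metis mult.assoc)
  have fp: "f * p = p * f" using ad f(1,2) p(1,2) unfolding adequate_def by blast
  have "f * p = g * p * f * p" using f(4) gp by simp
  also have "\<dots> = g * p * f" using fp p(2) unfolding idem_def by (metis mult.assoc)
  finally have fpf: "f * p = f" using f(4) gp by simp
  have "p = p * f * g" using pg fg by (simp add: mult.assoc)
  also have "\<dots> = g" using fp fpf fg by simp
  finally show ?thesis unfolding p_def by simp
qed

lemma decomp_right_factor_eq_star:
  assumes ad: "adequate S0" and ss: "star_subsemigroup S0"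
    and b: "b \<in> S0" "b * y * b = b"
    and z: "z = g * b * h" "greenL g (plus S0 b)" "greenR h (star S0 b)" "idem g" "idem h"
    and e: "e \<in> S0" "idem e" "z * e = z" "e * h = e"
  shows "h = star S0 b"
proof -
  define p q where "p = plus S0 b" and "q = star S0 b"
  have p: "p \<in> S0" "idem p" "Rstar S0 b p" and q: "q \<in> S0" "idem q" "Lstar S0 b q"
    using plus_props[OF ad b(1)] star_props[OF ad b(1)] unfolding p_def q_def by auto
  have "Lstar UNIV b q" using ss b(1) q unfolding star_subsemigroup_def by blast
  then have qyb: "q * y * b = q" using Lstar_UNIV_regular b(2) by blast
  have pb: "p * b = b" using Rstar_idem_mult_left[OF p(3,2,1)] .
  have pg: "p * g = p" using greenL_idem z(2,4) p(2) unfolding p_def by auto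
  have qh: "q * h = h" and hq: "h * q = q" using greenR_idem z(3,5) q(2) unfolding q_def by auto
  have "q * y * p * z = q * y * ((p * g) * b) * h" using z(1) by (simp add: mult.assoc)
  also have "\<dots> = h" using pg pb qyb qh by simp
  finally have he: "h * e = h" using e(3) by (metis mult.assoc)
  have eq: "e * q = q * e" using ad e(1,2) q(1,2) unfolding adequate_def by blast
  have "q * e = q * e * q * h" using e(4) qh by (simp add: mult.assoc)
  also have "\<dots> = e * q * h" using eq q(2) unfolding idem_def by (metis mult.assoc)
  finally have qe: "q * e = e" using e(4) qh by (simp add: mult.assoc)
  have "q = h * e * q" using hq he by simp
  also have "\<dots> = h" using eq qe he by (metis mult.assoc)
  finally show ?thesis unfolding q_def by simp
qed

lemma adequate_transversal_inverse_closed: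
  fixes S0 :: "'a::semigroup_mult set"
  assumes reg: "regular TYPE('a)" and at: "adequate_transversal S0" and a: "a \<in> S0"
  shows "\<exists>a'\<in>S0. mutually_inverse a a'"
proof -
  have ad: "adequate S0" and ss: "star_subsemigroup S0" and uq: "\<forall>z. \<exists>!c. decomp S0 z c"
    using at unfolding adequate_transversal_def by auto
  obtain x where x: "a * x * a = a" using reg unfolding regular_def by blast
  obtain e f where e: "e \<in> S0" "idem e" "Rstar S0 a e" and f: "f \<in> S0" "idem f" "Lstar S0 a f"
    using ad a unfolding adequate_def abundant_def by blast
  define a' where "a' = f * x * e"
  have aa': "a * a' = e" and a'a: "a' * a = f"
    using star_subsemigroup_local_inverse[OF ss a x e f] unfolding a'_def by auto
  have inv: "mutually_inverse a a'"
    using aa' a'a Rstar_idem_mult_left[OF e(3,2,1)] f(2)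
    unfolding a'_def mutually_inverse_def idem_def by (metis mult.assoc)
  obtain b g h where b: "b \<in> S0" and gh: "idem g" "idem h" "a' = g * b * h"
      "greenL g (plus S0 b)" "greenR h (star S0 b)"
    using uq unfolding decomp_def by blast
  obtain y where y: "b * y * b = b" using reg unfolding regular_def by blast
  have ga': "g * a' = a'" using gh(1,3) by (simp add: idem_def mult.assoc[symmetric])
  have a'h: "a' * h = a'" using gh(2,3) by (simp add: idem_def mult.assoc)
  have "g = plus S0 b"
  proof (rule decomp_left_factor_eq_plus[OF ad ss b y gh(3-5,1,2) f(1,2)])
    show "f * a' = a'" using f(2) unfolding a'_def idem_def by (simp add: mult.assoc[symmetric])
    show "g * f = f" using ga' a'a by (metis mult.assoc)
  qed
  moreover have "h = star S0 b"
  proof (rule decomp_right_factor_eq_star[OF ad ss b y gh(3-5,1,2) e(1,2)])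
    show "a' * e = a'" using e(2) unfolding a'_def idem_def by (simp add: mult.assoc)
    show "e * h = e" using aa' a'h by (metis mult.assoc)
  qed
  ultimately have "a' = b"
    using gh(3) Rstar_idem_mult_left[OF plus_props(3,2,1)[OF ad b]]
      Lstar_idem_mult_right[OF star_props(3,2,1)[OF ad b]] by simp
  then show ?thesis using inv b by blast
qed

lemma decomp_mutually_inverse:
  assumes ad: "adequate S0" and c: "c \<in> S0" "w \<in> S0" "mutually_inverse c w"
    and z: "mutually_inverse z w"
  shows "decomp S0 z c"
proof -
  have "(z * w) * c * (w * z) = z * (w * c * w) * z" by (simp add: mult.assoc)
  then have "z = (z * w) * c * (w * z)"
    using c(3) z by (simp add: mutually_inverse_def)
  then show ?thesis
    unfolding decomp_def
    using c(1) mutually_inverse_idem[OF z] greenL_mutually_inverse[OF z c(3)]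
      greenR_mutually_inverse[OF z c(3)]
      plus_eq_mutually_inverse[OF ad c] star_eq_mutually_inverse[OF ad c]
    by metis
qed

lemma decomp_mutually_inverse_transfer:
  assumes ad: "adequate S0" and d: "decomp S0 z a"
    and a': "a' \<in> S0" "mutually_inverse a a'"
  shows "mutually_inverse z a'"
proof -
  have a: "a \<in> S0" using d by (simp add: decomp_def)
  obtain e f where ef: "idem e" "idem f" "z = e * a * f"
      "greenL e (a * a')" "greenR f (a' * a)"
    using d plus_eq_mutually_inverse[OF ad a a'] star_eq_mutually_inverse[OF ad a a']
    unfolding decomp_def by metis
  have "a * a' * e = a * a'" "f * (a' * a) = a' * a"
    using greenL_idem(2) greenR_idem(2) ef mutually_inverse_idem[OF a'(2)] by blast+
  then have a'e: "a' * e = a'" and fa': "f * a' = a'"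
    using a'(2) unfolding mutually_inverse_def by (metis mult.assoc)+
  have "z * a' * z = e * a * (f * a') * e * a * f" using ef(3) by (simp add: mult.assoc)
  also have "\<dots> = e * (a * (a' * e) * a) * f" using fa' by (simp add: mult.assoc)
  also have "\<dots> = z" using a'e a'(2) ef(3) by (simp add: mutually_inverse_def mult.assoc)
  finally have "z * a' * z = z" .
  moreover have "a' * z * a' = (a' * e) * a * (f * a')" using ef(3) by (simp add: mult.assoc)
  ultimately show ?thesis
    using a'e fa' a'(2) unfolding mutually_inverse_def by simp
qed

lemma bar_eq_mutually_inverse:
  assumes at: "adequate_transversal S0"
    and c: "c \<in> S0" "w \<in> S0" "mutually_inverse c w" and z: "mutually_inverse z w"
  shows "bar S0 z = c"
  using at decomp_mutually_inverse[OF _ c z]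
  unfolding adequate_transversal_def bar_def by (blast intro: the1_equality)

lemma decomp_bar:
  assumes "adequate_transversal S0"
  shows "decomp S0 z (bar S0 z)"
  using assms unfolding adequate_transversal_def bar_def by (blast intro: theI')

lemma mutually_inverse_mult:
  fixes a b :: "'a::semigroup_mult"
  assumes bands: "\<And>e f::'a. idem e \<Longrightarrow> idem f \<Longrightarrow> idem (e * f)"
    and a: "mutually_inverse a a'" and b: "mutually_inverse b b'"
  shows "mutually_inverse (a * b) (b' * a')"
proof -
  have a1: "a * a' * a = a" "a' * a * a' = a'" and b1: "b * b' * b = b" "b' * b * b' = b'"
    using a b unfolding mutually_inverse_def by auto
  have i1: "idem (a' * a * (b * b'))"
    by (rule bands[OF mutually_inverse_idem(2)[OF a] mutually_inverse_idem(1)[OF b]])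
  have i2: "idem (b * b' * (a' * a))"
    by (rule bands[OF mutually_inverse_idem(1)[OF b] mutually_inverse_idem(2)[OF a]])
  have "a * b * (b' * a') * (a * b) = (a * a' * a) * b * (b' * a') * (a * (b * b' * b))"
    using a1 b1 by simp
  also have "\<dots> = a * ((a' * a * (b * b')) * (a' * a * (b * b'))) * b" by (simp add: mult.assoc)
  also have "\<dots> = (a * a' * a) * (b * b' * b)" using i1 by (simp add: idem_def mult.assoc)
  finally have ab: "a * b * (b' * a') * (a * b) = a * b" using a1 b1 by simp
  have "b' * a' * (a * b) * (b' * a') = (b' * b * b') * a' * (a * b) * (b' * (a' * a * a'))"
    using a1 b1 by simp
  also have "\<dots> = b' * ((b * b' * (a' * a)) * (b * b' * (a' * a))) * a'" by (simp add: mult.assoc)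
  also have "\<dots> = (b' * b * b') * (a' * a * a')" using i2 by (simp add: idem_def mult.assoc)
  finally have "b' * a' * (a * b) * (b' * a') = b' * a'" using a1 b1 by simp
  with ab show ?thesis unfolding mutually_inverse_def by blast
qed

theorem corollary2p6:
  fixes S0 :: "'a::semigroup_mult set"
  assumes "orthodox TYPE('a)"
    and "adequate_transversal S0"
  shows "\<forall>x y::'a. bar S0 (x * y) = bar S0 x * bar S0 y"
proof (intro allI)
  fix x y :: 'a
  have reg: "regular TYPE('a)" and bands: "\<And>e f::'a. idem e \<Longrightarrow> idem f \<Longrightarrow> idem (e * f)"
    using assms(1) unfolding orthodox_def by auto
  have ad: "adequate S0" using assms(2) unfolding adequate_transversal_def by blast
  have bars: "bar S0 x \<in> S0" "bar S0 y \<in> S0"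
    using decomp_bar[OF assms(2)] unfolding decomp_def by blast+
  obtain a' b' where a': "a' \<in> S0" "mutually_inverse (bar S0 x) a'"
    and b': "b' \<in> S0" "mutually_inverse (bar S0 y) b'"
    using adequate_transversal_inverse_closed[OF reg assms(2)] bars by meson
  have "mutually_inverse x a'" "mutually_inverse y b'"
    using decomp_mutually_inverse_transfer[OF ad decomp_bar[OF assms(2)]] a' b' by blast+
  then have "mutually_inverse (x * y) (b' * a')"
    using mutually_inverse_mult[OF bands] by blast
  moreover have "mutually_inverse (bar S0 x * bar S0 y) (b' * a')"
    using mutually_inverse_mult[OF bands a'(2) b'(2)] .
  ultimately show "bar S0 (x * y) = bar S0 x * bar S0 y"
    using bar_eq_mutually_inverse[OF assms(2)] adequate_mult_closed[OF ad] bars a'(1) b'(1)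
    by blast
qed

end
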